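(* Let $\mathcal{A}$ be a $C^*$-algebra, $\mathcal{E}$ a right Hilbert $\mathcal{A}$-module, $\mathcal{F}$ a non-trivial closed submodule of $\mathcal{E}$, $\mathcal{H}_1,\mathcal{H}_2$ Hilbert spaces, and $\phi:\mathcal{A}\to\mathcal{B}(\mathcal{H}_1)$ a completely positive map. Suppose there exists a non-degenerate $\phi$-map $\Phi:\mathcal{F}\to\mathcal{B}(\mathcal{H}_1,\mathcal{H}_2)$ which has a $\phi$-map extension $\Psi:\mathcal{E}\to\mathcal{B}(\mathcal{H}_1,\mathcal{H}_2)$ (i.e. $\Psi$ is a $\phi$-map on $\mathcal{E}$ with $\Psi|_{\mathcal{F}}=\Phi$). Then: (i) $\phi(\langle z,x\rangle)=0$ for all $z\in\mathcal{F}^{\perp}$ and $x\in\mathcal{E}$; (ii) for every Hilbert space $\mathcal{K}$, every $\phi$-map $\Theta:\mathcal{F}\to\mathcal{B}(\mathcal{H}_1,\mathcal{K})$ has a $\phi$-map extension $\Theta':\mathcal{E}\to\mathcal{B}(\mathcal{H}_1,\mathcal{K})$.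
   Context: For Hilbert spaces $\mathcal{H},\mathcal{K}$, $\mathcal{B}(\mathcal{H},\mathcal{K})$ is a right Hilbert $\mathcal{B}(\mathcal{H})$-module with module action given by composition and inner product $\langle T,S\rangle=T^*S$. For a completely positive map $\phi:\mathcal{A}\to\mathcal{B}(\mathcal{H}_1)$ and a Hilbert $\mathcal{A}$-module $\mathcal{X}$, a map $\Phi:\mathcal{X}\to\mathcal{B}(\mathcal{H}_1,\mathcal{K})$ is a $\phi$-map if $\Phi(x)^*\Phi(y)=\phi(\langle x,y\rangle)$ for all $x,y\in\mathcal{X}$; it is non-degenerate if the closed linear span of $\{\Phi(x)h: x\in\mathcal{X},h\in\mathcal{H}_1\}$ equals $\mathcal{K}$. $\mathcal{F}^{\perp}=\{x\in\mathcal{E}:\langle x,y\rangle=0\text{ for all }y\in\mathcal{F}\}$. *)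

theory Defs
  imports "HOL-Analysis.Analysis"
begin

class cvec = real_vector +
  fixes cscale :: "complex \<Rightarrow> 'a \<Rightarrow> 'a"
  assumes cscale_add_right: "cscale c (x + y) = cscale c x + cscale c y"
    and cscale_add_left: "cscale (c + d) x = cscale c x + cscale d x"
    and cscale_cscale: "cscale c (cscale d x) = cscale (c * d) x"
    and cscale_one: "cscale 1 x = x"
    and scaleR_cscale: "scaleR r x = cscale (complex_of_real r) x"

class chilbert = cvec + banach +
  fixes hinner :: "'a \<Rightarrow> 'a \<Rightarrow> complex"
  assumes hinner_add_right: "hinner x (y + z) = hinner x y + hinner x z"
    and hinner_cscale_right: "hinner x (cscale c y) = c * hinner x y"
    and hinner_conj: "hinner y x = cnj (hinner x y)"
    and hinner_self_nonneg: "0 \<le> Re (hinner x x)"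
    and norm_hinner: "norm x = sqrt (Re (hinner x x))"

class cstar = cvec + real_normed_algebra + banach +
  fixes adjA :: "'a \<Rightarrow> 'a"
  assumes norm_cscale: "norm (cscale c a) = cmod c * norm a"
    and mult_cscale_left: "cscale c a * b = cscale c (a * b)"
    and mult_cscale_right: "a * cscale c b = cscale c (a * b)"
    and adjA_adjA: "adjA (adjA a) = a"
    and adjA_add: "adjA (a + b) = adjA a + adjA b"
    and adjA_cscale: "adjA (cscale c a) = cscale (cnj c) (adjA a)"
    and adjA_mult: "adjA (a * b) = adjA b * adjA a"
    and cstar_identity: "norm (adjA a * a) = (norm a)^2"

definition cpositive :: "'a::cstar \<Rightarrow> bool" where
  "cpositive a \<longleftrightarrow> (\<exists>b. a = adjA b * b)"

definition cnonneg :: "complex \<Rightarrow> bool" where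
  "cnonneg z \<longleftrightarrow> Im z = 0 \<and> 0 \<le> Re z"

definition hm_norm :: "('e \<Rightarrow> 'e \<Rightarrow> 'a::cstar) \<Rightarrow> 'e \<Rightarrow> real" where
  "hm_norm ip x = sqrt (norm (ip x x))"

definition hm_tendsto :: "('e::cvec \<Rightarrow> 'e \<Rightarrow> 'a::cstar) \<Rightarrow> (nat \<Rightarrow> 'e) \<Rightarrow> 'e \<Rightarrow> bool" where
  "hm_tendsto ip X L \<longleftrightarrow> (\<forall>e>0. \<exists>N. \<forall>n\<ge>N. hm_norm ip (X n - L) < e)"

definition hm_cauchy :: "('e::cvec \<Rightarrow> 'e \<Rightarrow> 'a::cstar) \<Rightarrow> (nat \<Rightarrow> 'e) \<Rightarrow> bool" where
  "hm_cauchy ip X \<longleftrightarrow> (\<forall>e>0. \<exists>N. \<forall>m\<ge>N. \<forall>n\<ge>N. hm_norm ip (X m - X n) < e)"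

definition hilbert_module :: "('e::cvec \<Rightarrow> 'a::cstar \<Rightarrow> 'e) \<Rightarrow> ('e \<Rightarrow> 'e \<Rightarrow> 'a) \<Rightarrow> bool" where
  "hilbert_module act ip \<longleftrightarrow>
     (\<forall>x y a. act (x + y) a = act x a + act y a) \<and>
     (\<forall>x a b. act x (a + b) = act x a + act x b) \<and>
     (\<forall>x a b. act (act x a) b = act x (a * b)) \<and>
     (\<forall>c x a. act (cscale c x) a = cscale c (act x a)) \<and>
     (\<forall>c x a. act x (cscale c a) = cscale c (act x a)) \<and>
     (\<forall>x y z. ip x (y + z) = ip x y + ip x z) \<and>
     (\<forall>c x y. ip x (cscale c y) = cscale c (ip x y)) \<and>
     (\<forall>x y a. ip x (act y a) = ip x y * a) \<and>
     (\<forall>x y. adjA (ip x y) = ip y x) \<and>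
     (\<forall>x. cpositive (ip x x)) \<and>
     (\<forall>x. ip x x = 0 \<longrightarrow> x = 0) \<and>
     (\<forall>X. hm_cauchy ip X \<longrightarrow> (\<exists>L. hm_tendsto ip X L))"

definition closed_submodule :: "('e::cvec \<Rightarrow> 'a::cstar \<Rightarrow> 'e) \<Rightarrow> ('e \<Rightarrow> 'e \<Rightarrow> 'a) \<Rightarrow> 'e set \<Rightarrow> bool" where
  "closed_submodule act ip F \<longleftrightarrow>
     0 \<in> F \<and>
     (\<forall>x\<in>F. \<forall>y\<in>F. x + y \<in> F) \<and>
     (\<forall>c. \<forall>x\<in>F. cscale c x \<in> F) \<and>
     (\<forall>x\<in>F. \<forall>a. act x a \<in> F) \<and>
     (\<forall>X L. (\<forall>n. X n \<in> F) \<and> hm_tendsto ip X L \<longrightarrow> L \<in> F)"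

definition module_orth :: "('e \<Rightarrow> 'e \<Rightarrow> 'a::cstar) \<Rightarrow> 'e set \<Rightarrow> 'e set" where
  "module_orth ip F = {x. \<forall>y\<in>F. ip x y = 0}"

definition cblin :: "('h::chilbert \<Rightarrow> 'k::chilbert) \<Rightarrow> bool" where
  "cblin T \<longleftrightarrow> (\<forall>x y. T (x + y) = T x + T y) \<and> (\<forall>c x. T (cscale c x) = cscale c (T x))
      \<and> (\<exists>C. \<forall>x. norm (T x) \<le> C * norm x)"

definition cadj :: "('h::chilbert \<Rightarrow> 'k::chilbert) \<Rightarrow> 'k \<Rightarrow> 'h" where
  "cadj T = (\<lambda>y. THE z. \<forall>x. hinner (T x) y = hinner x z)"

definition complex_span :: "'h::cvec set \<Rightarrow> 'h set" where
  "complex_span S = {x. \<exists>(n::nat) c v. (\<forall>i<n. v i \<in> S) \<and> x = (\<Sum>i<n. cscale (c i) (v i))}"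

text \<open>\<open>\<phi> : A \<rightarrow> B(H)\<close> completely positive: linear, with values bounded operators, and
  every amplification \<open>\<phi>\<^sub>n\<close> maps positive matrices \<open>B* B\<close> in \<open>M\<^sub>n(A)\<close> to positive
  operators on \<open>H\<^sup>n\<close>.\<close>
definition completely_positive :: "('a::cstar \<Rightarrow> 'h::chilbert \<Rightarrow> 'h) \<Rightarrow> bool" where
  "completely_positive \<phi> \<longleftrightarrow>
     (\<forall>a. cblin (\<phi> a)) \<and>
     (\<forall>a b h. \<phi> (a + b) h = \<phi> a h + \<phi> b h) \<and>
     (\<forall>c a h. \<phi> (cscale c a) h = cscale c (\<phi> a h)) \<and>
     (\<forall>(n::nat) (B :: nat \<Rightarrow> nat \<Rightarrow> 'a) (h :: nat \<Rightarrow> 'h).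
        cnonneg (\<Sum>i<n. \<Sum>j<n. hinner (h i) (\<phi> (\<Sum>k<n. adjA (B k i) * B k j) (h j))))"

definition phi_map :: "('e \<Rightarrow> 'e \<Rightarrow> 'a::cstar) \<Rightarrow> ('a \<Rightarrow> 'h::chilbert \<Rightarrow> 'h) \<Rightarrow> 'e set
     \<Rightarrow> ('e \<Rightarrow> 'h \<Rightarrow> 'k::chilbert) \<Rightarrow> bool" where
  "phi_map ip \<phi> X \<Phi> \<longleftrightarrow>
     (\<forall>x\<in>X. cblin (\<Phi> x)) \<and> (\<forall>x\<in>X. \<forall>y\<in>X. cadj (\<Phi> x) \<circ> \<Phi> y = \<phi> (ip x y))"

definition nondegenerate :: "'e set \<Rightarrow> ('e \<Rightarrow> 'h::chilbert \<Rightarrow> 'k::chilbert) \<Rightarrow> bool" where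
  "nondegenerate X \<Phi> \<longleftrightarrow> closure (complex_span {\<Phi> x h | x h. x \<in> X}) = UNIV"

end

theory Submission
  imports Defs
begin

text \<open>
  For \<open>z \<in> F\<^sup>\<perp>\<close> and \<open>y \<in> F\<close> we have \<open>\<langle>\<Phi>(y)h, \<Psi>(z)k\<rangle> = \<langle>h, \<phi>(\<langle>y,z\<rangle>)k\<rangle> = 0\<close>; since the
  vectors \<open>\<Phi>(y)h\<close> span a dense subspace, \<open>\<Psi>(z) = 0\<close>, and then
  \<open>\<langle>k, \<phi>(\<langle>z,x\<rangle>)h\<rangle> = \<langle>\<Psi>(z)k, \<Psi>(x)h\<rangle> = 0\<close>.
  For (ii), both \<open>\<Phi>\<close> and \<open>\<Theta>\<close> are \<open>\<phi>\<close>-maps on \<open>F\<close>, so \<open>\<Phi>(x)h \<mapsto> \<Theta>(x)h\<close> preserves inner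
  products; it therefore extends from the dense span to an isometry \<open>V : H\<^sub>2 \<rightarrow> K\<close>, and
  \<open>V \<circ> \<Psi>\<close> is the required extension of \<open>\<Theta>\<close>. The adjoint is given by a definite
  description, so its defining property rests on the Riesz representation theorem.
\<close>

lemma cscale_zero_right [simp]: "cscale c (0::'a::cvec) = 0"
  using cscale_add_right[of c "0::'a" 0] by simp

lemma cscale_minus_right: "cscale c (- (x::'a::cvec)) = - cscale c x"
  using cscale_add_right[of c x "- x"] by (simp add: add_eq_0_iff)

lemma cscale_diff_right: "cscale c ((x::'a::cvec) - y) = cscale c x - cscale c y"
  using cscale_add_right[of c x "- y"] by (simp add: cscale_minus_right)

lemma hinner_zero_right [simp]: "hinner x (0::'a::chilbert) = 0"
  using hinner_add_right[of x "0::'a" 0] by simp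

lemma hinner_zero_left [simp]: "hinner (0::'a::chilbert) x = 0"
  using hinner_conj[of 0 x] by simp

lemma hinner_add_left: "hinner ((x::'a::chilbert) + y) z = hinner x z + hinner y z"
  by (metis complex_cnj_add hinner_add_right hinner_conj)

lemma hinner_cscale_left: "hinner (cscale c (x::'a::chilbert)) y = cnj c * hinner x y"
  by (metis complex_cnj_cnj complex_cnj_mult hinner_cscale_right hinner_conj)

lemma hinner_diff_right: "hinner x ((y::'a::chilbert) - z) = hinner x y - hinner x z"
  by (metis add_diff_cancel eq_diff_eq hinner_add_right)

lemma hinner_diff_left: "hinner ((x::'a::chilbert) - y) z = hinner x z - hinner y z"
  by (metis complex_cnj_diff hinner_conj hinner_diff_right)

lemma hinner_sum_left: "hinner (\<Sum>i\<in>I. f i) x = (\<Sum>i\<in>I. hinner (f i :: 'a::chilbert) x)"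
  by (induction I rule: infinite_finite_induct) (auto simp: hinner_add_left)

lemma hinner_sum_right: "hinner x (\<Sum>i\<in>I. f i) = (\<Sum>i\<in>I. hinner x (f i :: 'a::chilbert))"
  by (induction I rule: infinite_finite_induct) (auto simp: hinner_add_right)

lemma hinner_self: "hinner (x::'a::chilbert) x = complex_of_real ((norm x)\<^sup>2)"
proof -
  have "Im (hinner x x) = 0"
    using hinner_conj[of x x] by (metis cnj.simps(2) neg_equal_zero)
  moreover have "Re (hinner x x) = (norm x)\<^sup>2"
    using norm_hinner[of x] hinner_self_nonneg[of x] by simp
  ultimately show ?thesis by (simp add: complex_eq_iff)
qed

lemma hinner_self_eq_0 [simp]: "hinner (x::'a::chilbert) x = 0 \<longleftrightarrow> x = 0"
  by (simp add: hinner_self)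

lemma power2_norm_eq_hinner: "(norm (x::'a::chilbert))\<^sup>2 = Re (hinner x x)"
  by (simp add: hinner_self)

lemma norm_cscale_chilbert: "norm (cscale c (x::'a::chilbert)) = cmod c * norm x"
proof -
  have "(norm (cscale c x))\<^sup>2 = (cmod c * norm x)\<^sup>2"
    unfolding power2_norm_eq_hinner hinner_cscale_left hinner_cscale_right mult.assoc[symmetric]
    by (metis Re_complex_of_real complex_norm_square hinner_self mult.commute of_real_mult
        power_mult_distrib)
  then show ?thesis by (simp add: power2_eq_iff_nonneg)
qed

lemma power2_norm_add:
  "(norm ((x::'a::chilbert) + y))\<^sup>2 = (norm x)\<^sup>2 + (norm y)\<^sup>2 + 2 * Re (hinner x y)"
  using hinner_conj[of y x]
  by (simp add: power2_norm_eq_hinner hinner_add_left hinner_add_right)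

lemma power2_norm_diff:
  "(norm ((x::'a::chilbert) - y))\<^sup>2 = (norm x)\<^sup>2 + (norm y)\<^sup>2 - 2 * Re (hinner x y)"
  using hinner_conj[of y x]
  by (simp add: power2_norm_eq_hinner hinner_diff_left hinner_diff_right)

lemma parallelogram_law:
  "(norm ((x::'a::chilbert) - y))\<^sup>2 = 2 * (norm x)\<^sup>2 + 2 * (norm y)\<^sup>2 - (norm (x + y))\<^sup>2"
  using power2_norm_add[of x y] power2_norm_diff[of x y] by simp

lemma norm_diff_eq_if_hinner_eq:
  fixes a a' :: "'h::chilbert" and b b' :: "'k::chilbert"
  assumes "hinner b b = hinner a a" "hinner b' b' = hinner a' a'" "hinner b b' = hinner a a'"
  shows "norm (b - b') = norm (a - a')"
proof -
  have "hinner b' b = hinner a' a" using assms(3) hinner_conj by metis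
  then have "(norm (b - b'))\<^sup>2 = (norm (a - a'))\<^sup>2"
    unfolding power2_norm_eq_hinner by (simp add: hinner_diff_left hinner_diff_right assms)
  then show ?thesis by (simp add: power2_eq_iff_nonneg)
qed

lemma tendsto_hinner:
  fixes X :: "nat \<Rightarrow> 'a::chilbert"
  assumes "X \<longlonglongrightarrow> a" "Y \<longlonglongrightarrow> b"
  shows "(\<lambda>n. hinner (X n) (Y n)) \<longlonglongrightarrow> hinner a b"
proof -
  have polar: "Re (hinner x y) = ((norm (x + y))\<^sup>2 - (norm (x - y))\<^sup>2) / 4" for x y :: 'a
    using power2_norm_add[of x y] power2_norm_diff[of x y] by simp
  have Re: "(\<lambda>n. Re (hinner (X n) (Y n))) \<longlonglongrightarrow> Re (hinner a b)"
    if "X \<longlonglongrightarrow> a" for X :: "nat \<Rightarrow> 'a" and a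
    unfolding polar by (intro tendsto_intros that assms(2)) simp
  have "norm (cscale \<i> (X n) - cscale \<i> a) = norm (X n - a)" for n
    by (simp add: cscale_diff_right[symmetric] norm_cscale_chilbert)
  then have "(\<lambda>n. cscale \<i> (X n)) \<longlonglongrightarrow> cscale \<i> a"
    using assms(1) by (simp add: tendsto_iff dist_norm)
  from Re[OF assms(1)] Re[OF this] show ?thesis
    unfolding tendsto_complex_iff by (simp add: hinner_cscale_left)
qed

lemma orthogonal_to_dense_span_eq_0:
  fixes w :: "'h::chilbert"
  assumes dense: "closure (complex_span S) = UNIV" and orth: "\<And>v. v \<in> S \<Longrightarrow> hinner v w = 0"
  shows "w = 0"
proof -
  have span: "hinner s w = 0" if s: "s \<in> complex_span S" for s
  proof -
    obtain n :: nat and c v where "\<forall>i<n. v i \<in> S" "s = (\<Sum>i<n. cscale (c i) (v i))"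
      using s unfolding complex_span_def by auto
    then show ?thesis by (simp add: hinner_sum_left hinner_cscale_left orth)
  qed
  obtain X where X: "\<And>n. X n \<in> complex_span S" "X \<longlonglongrightarrow> w"
    using dense closure_sequential[of w "complex_span S"] by auto
  then have "(\<lambda>n. hinner (X n) w) \<longlonglongrightarrow> hinner w w" by (intro tendsto_hinner tendsto_const)
  then have "(\<lambda>n. 0) \<longlonglongrightarrow> hinner w w" using span X(1) by simp
  then show ?thesis using LIMSEQ_const_iff[of 0 "hinner w w"] by simp
qed

section \<open>The Riesz representation theorem\<close>

text \<open>Working with squared norms, the parallelogram law bounds \<open>\<parallel>X\<^sub>m - X\<^sub>n\<parallel>\<^sup>2\<close> by the
  excesses of \<open>\<parallel>X\<^sub>m\<parallel>\<^sup>2\<close> and \<open>\<parallel>X\<^sub>n\<parallel>\<^sup>2\<close> over their infimum, so minimizing sequences are Cauchy.\<close>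

lemma closed_midpoint_convex_min_norm:
  fixes S :: "'a::chilbert set"
  assumes "S \<noteq> {}" "closed S"
    and midpoint: "\<And>x y. x \<in> S \<Longrightarrow> y \<in> S \<Longrightarrow> cscale (1/2) (x + y) \<in> S"
  shows "\<exists>x0\<in>S. \<forall>y\<in>S. norm x0 \<le> norm y"
proof -
  define D where "D = Inf ((\<lambda>x. (norm x)\<^sup>2) ` S)"
  have bdd: "bdd_below ((\<lambda>x. (norm x)\<^sup>2) ` S)" by (intro bdd_belowI[of _ 0]) auto
  have D_le: "D \<le> (norm y)\<^sup>2" if "y \<in> S" for y
    unfolding D_def using that bdd by (intro cInf_lower) auto
  have "\<exists>x\<in>S. (norm x)\<^sup>2 < D + 1 / Suc n" for n
    using cInf_less_iff[OF _ bdd, of "D + 1 / Suc n"] assms(1) unfolding D_def by auto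
  then obtain X where X_in: "\<And>n. X n \<in> S" and X_norm: "\<And>n. (norm (X n))\<^sup>2 < D + 1 / Suc n"
    by metis
  have X_diff: "(norm (X m - X n))\<^sup>2 \<le> 2 / Suc m + 2 / Suc n" for m n
  proof -
    have "D \<le> (norm (cscale (1/2) (X m + X n)))\<^sup>2" by (intro D_le midpoint X_in)
    then have "4 * D \<le> (norm (X m + X n))\<^sup>2" by (simp add: norm_cscale_chilbert power_divide)
    then show ?thesis using X_norm[of m] X_norm[of n] unfolding parallelogram_law by simp
  qed
  have "Cauchy X"
  proof (rule metric_CauchyI)
    fix e :: real assume "e > 0"
    then obtain N where N: "4 / Suc N < e\<^sup>2"
      using reals_Archimedean[of "e\<^sup>2 / 4"] by (auto simp: field_simps)
    have "dist (X m) (X n) < e" if "m \<ge> N" "n \<ge> N" for m n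
    proof -
      have "2 / Suc m + 2 / Suc n \<le> 2 / Suc N + (2 / Suc N :: real)"
        using that by (intro add_mono) (simp_all add: frac_le)
      with X_diff[of m n] N have "(norm (X m - X n))\<^sup>2 < e\<^sup>2" by simp
      with \<open>e > 0\<close> show ?thesis by (simp add: dist_norm power_less_imp_less_base)
    qed
    then show "\<exists>N. \<forall>m\<ge>N. \<forall>n\<ge>N. dist (X m) (X n) < e" by blast
  qed
  then obtain x0 where lim: "X \<longlonglongrightarrow> x0" using Cauchy_convergent_iff convergent_def by blast
  have "(norm x0)\<^sup>2 \<le> D + 0"
  proof (rule LIMSEQ_le)
    show "(\<lambda>n. (norm (X n))\<^sup>2) \<longlonglongrightarrow> (norm x0)\<^sup>2" by (intro tendsto_intros lim)
    show "(\<lambda>n. D + 1 / Suc n) \<longlonglongrightarrow> D + 0"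
      by (intro tendsto_add tendsto_const LIMSEQ_Suc[OF lim_inverse_n'])
    show "\<exists>N. \<forall>n\<ge>N. (norm (X n))\<^sup>2 \<le> D + 1 / Suc n" using X_norm less_imp_le by blast
  qed
  show ?thesis
  proof (intro bexI ballI)
    show "x0 \<in> S" using \<open>closed S\<close> X_in lim by (rule closed_sequentially)
    fix y assume "y \<in> S"
    show "norm x0 \<le> norm y"
    proof (rule power2_le_imp_le)
      show "(norm x0)\<^sup>2 \<le> (norm y)\<^sup>2" using \<open>(norm x0)\<^sup>2 \<le> D + 0\<close> D_le[OF \<open>y \<in> S\<close>] by linarith
    qed simp
  qed
qed

lemma min_norm_imp_orthogonal:
  fixes x0 n :: "'a::chilbert"
  assumes min: "\<And>t. norm x0 \<le> norm (x0 + cscale t n)"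
  shows "hinner x0 n = 0"
proof (cases "n = 0")
  case False
  define a where "a = hinner x0 n"
  define N where "N = (norm n)\<^sup>2"
  have "N > 0" using False by (simp add: N_def)
  define t where "t = - cnj a / complex_of_real N"
  have "hinner (x0 + cscale t n) (x0 + cscale t n)
      = hinner x0 x0 + t * a + cnj t * cnj a + cnj t * t * complex_of_real N"
    using hinner_conj[of n x0]
    by (simp add: hinner_add_left hinner_add_right hinner_cscale_left hinner_cscale_right
        a_def N_def hinner_self[of n] algebra_simps)
  also have "\<dots> = complex_of_real ((norm x0)\<^sup>2 - (cmod a)\<^sup>2 / N)"
    using \<open>N > 0\<close> unfolding t_def hinner_self[of x0] of_real_diff of_real_divide complex_norm_square
    by (simp add: field_simps)
  finally have "(norm (x0 + cscale t n))\<^sup>2 = (norm x0)\<^sup>2 - (cmod a)\<^sup>2 / N"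
    unfolding power2_norm_eq_hinner by simp
  moreover have "(norm x0)\<^sup>2 \<le> (norm (x0 + cscale t n))\<^sup>2" using min[of t] by (simp add: power_mono)
  ultimately have "(cmod a)\<^sup>2 / N \<le> 0" by simp
  with \<open>N > 0\<close> show ?thesis by (simp add: a_def divide_le_0_iff)
qed simp

text \<open>If \<open>f \<noteq> 0\<close>, the element \<open>x\<^sub>0\<close> of least norm on the hyperplane \<open>f = 1\<close> is orthogonal to
  \<open>ker f\<close>, and \<open>z = x\<^sub>0 / \<parallel>x\<^sub>0\<parallel>\<^sup>2\<close> represents \<open>f\<close>.\<close>

theorem riesz_representation:
  fixes f :: "'a::chilbert \<Rightarrow> complex"
  assumes add: "\<And>x y. f (x + y) = f x + f y"
    and scale: "\<And>c x. f (cscale c x) = c * f x"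
    and cont: "\<And>X L. X \<longlonglongrightarrow> L \<Longrightarrow> (\<lambda>n. f (X n)) \<longlonglongrightarrow> f L"
  shows "\<exists>z. \<forall>x. f x = hinner z x"
proof (cases "\<forall>x. f x = 0")
  case True
  then show ?thesis by (intro exI[of _ 0]) simp
next
  case False
  then obtain x1 where "f x1 \<noteq> 0" by auto
  then have "f (cscale (1 / f x1) x1) = 1" by (simp add: scale)
  then have "{x. f x = 1} \<noteq> {}" by blast
  moreover have "closed {x. f x = 1}"
    unfolding closed_sequential_limits
  proof (intro allI impI)
    fix X L assume "(\<forall>n. X n \<in> {x. f x = 1}) \<and> X \<longlonglongrightarrow> L"
    then have "(\<lambda>n. 1) \<longlonglongrightarrow> f L" using cont[of X L] by simp
    then show "L \<in> {x. f x = 1}" by (simp add: LIMSEQ_const_iff)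
  qed
  moreover have "f (cscale (1/2) (x + y)) = 1" if "f x = 1" "f y = 1" for x y
    using that by (simp add: scale add)
  ultimately obtain x0 where "f x0 = 1" and min: "\<And>y. f y = 1 \<Longrightarrow> norm x0 \<le> norm y"
    using closed_midpoint_convex_min_norm[of "{x. f x = 1}"] by auto
  then have "x0 \<noteq> 0" using add[of 0 0] by auto
  have ker: "hinner x0 n = 0" if "f n = 0" for n
    by (rule min_norm_imp_orthogonal) (simp add: min add scale \<open>f x0 = 1\<close> that)
  show ?thesis
  proof (intro exI allI)
    fix x
    have "hinner x0 (x + cscale (- f x) x0) = 0" by (rule ker) (simp add: add scale \<open>f x0 = 1\<close>)
    then have "hinner x0 x = f x * hinner x0 x0" by (simp add: hinner_add_right hinner_cscale_right)
    with \<open>x0 \<noteq> 0\<close> show "f x = hinner (cscale (complex_of_real (1 / (norm x0)\<^sup>2)) x0) x"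
      unfolding hinner_cscale_left hinner_self by (simp add: field_simps)
  qed
qed

lemma cblin_add: "cblin T \<Longrightarrow> T (a + b) = T a + T b"
  by (simp add: cblin_def)

lemma cblin_cscale: "cblin T \<Longrightarrow> T (cscale c a) = cscale c (T a)"
  by (simp add: cblin_def)

lemma cblin_diff: "cblin T \<Longrightarrow> T (a - b) = T a - T b"
  using cblin_add[of T "a - b" b] by (simp add: eq_diff_eq)

lemma cblin_tendsto:
  assumes "cblin T" "X \<longlonglongrightarrow> L"
  shows "(\<lambda>n. T (X n)) \<longlonglongrightarrow> T L"
proof -
  obtain C where C: "\<And>x. norm (T x) \<le> C * norm x" using assms(1) unfolding cblin_def by blast
  have bound: "\<forall>n. norm (T (X n) - T L) \<le> C * norm (X n - L)"
    using C by (simp add: cblin_diff[OF assms(1), symmetric])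
  have "(\<lambda>n. C * norm (X n - L)) \<longlonglongrightarrow> 0"
    using assms(2) by (intro tendsto_mult_right_zero tendsto_norm_zero LIM_zero)
  with bound have "(\<lambda>n. T (X n) - T L) \<longlonglongrightarrow> 0"
    by (rule Lim_null_comparison[OF always_eventually])
  then show ?thesis by (rule LIM_zero_cancel)
qed

lemma hinner_cadj:
  fixes T :: "'h::chilbert \<Rightarrow> 'k::chilbert"
  assumes "cblin T"
  shows "hinner (T x) w = hinner x (cadj T w)"
proof -
  have "\<exists>z. \<forall>x. hinner w (T x) = hinner z x"
  proof (rule riesz_representation)
    show "hinner w (T (x + y)) = hinner w (T x) + hinner w (T y)" for x y
      by (simp add: cblin_add[OF assms] hinner_add_right)
    show "hinner w (T (cscale c x)) = c * hinner w (T x)" for c x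
      by (simp add: cblin_cscale[OF assms] hinner_cscale_right)
    show "(\<lambda>n. hinner w (T (X n))) \<longlonglongrightarrow> hinner w (T L)" if "X \<longlonglongrightarrow> L" for X L
      by (rule tendsto_hinner[OF tendsto_const cblin_tendsto[OF assms that]])
  qed
  then obtain z where "\<And>x. hinner w (T x) = hinner z x" by blast
  then have z: "\<forall>x. hinner (T x) w = hinner x z" by (metis hinner_conj)
  have "(THE z. \<forall>x. hinner (T x) w = hinner x z) = z"
  proof (rule the_equality)
    fix z' assume "\<forall>x. hinner (T x) w = hinner x z'"
    with z have "hinner (z' - z) (z' - z) = 0" by (simp add: hinner_diff_right)
    then show "z' = z" by simp
  qed (fact z)
  with z show ?thesis unfolding cadj_def by simp
qed

definition inner_preserving :: "('h::chilbert \<Rightarrow> 'k::chilbert) \<Rightarrow> bool" where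
  "inner_preserving V \<longleftrightarrow> (\<forall>a b. hinner (V a) (V b) = hinner a b)"

text \<open>In both cases the defect \<open>u\<close> is orthogonal to the range of \<open>V\<close>, and \<open>u\<close> itself
  is a combination of elements of that range.\<close>

lemma inner_preserving_add:
  assumes "inner_preserving V"
  shows "V (a + b) = V a + V b"
proof -
  define u where "u = V (a + b) - V a - V b"
  have "hinner u (V q) = 0" for q
    using assms unfolding u_def inner_preserving_def by (simp add: hinner_diff_left hinner_add_left)
  then have "hinner u u = 0" by (subst (2) u_def) (simp add: hinner_diff_right)
  then show ?thesis by (simp add: u_def diff_eq_eq)
qed

lemma inner_preserving_cscale:
  assumes "inner_preserving V"
  shows "V (cscale c a) = cscale c (V a)"
proof -
  define u where "u = V (cscale c a) - cscale c (V a)"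
  have "hinner u (V q) = 0" for q
    using assms unfolding u_def inner_preserving_def by (simp add: hinner_diff_left hinner_cscale_left)
  then have "hinner u u = 0" by (subst (2) u_def) (simp add: hinner_diff_right hinner_cscale_right)
  then show ?thesis by (simp add: u_def)
qed

lemma inner_preserving_norm:
  assumes "inner_preserving V"
  shows "norm (V a) = norm a"
  using assms norm_diff_eq_if_hinner_eq[of "V a" a 0 0] unfolding inner_preserving_def by simp

lemma cblin_comp_inner_preserving:
  assumes "inner_preserving V" "cblin T"
  shows "cblin (\<lambda>h. V (T h))"
  using assms inner_preserving_norm[OF assms(1)]
  unfolding cblin_def by (simp add: inner_preserving_add inner_preserving_cscale)

lemma cadj_comp_inner_preserving:
  assumes "inner_preserving V"
  shows "cadj (\<lambda>h. V (T h)) (V w) = cadj T w"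
  using assms unfolding cadj_def inner_preserving_def by simp

section \<open>Extending inner-preserving relations\<close>

definition inner_preserving_rel :: "('h::chilbert \<times> 'k::chilbert) set \<Rightarrow> bool" where
  "inner_preserving_rel G \<longleftrightarrow>
     (\<forall>a b a' b'. (a, b) \<in> G \<longrightarrow> (a', b') \<in> G \<longrightarrow> hinner b b' = hinner a a')"

lemma inner_preserving_rel_dist:
  assumes "inner_preserving_rel G" "(a, b) \<in> G" "(a', b') \<in> G"
  shows "dist b b' = dist a a'"
  using assms unfolding inner_preserving_rel_def dist_norm
  by (intro norm_diff_eq_if_hinner_eq) blast+

lemma inner_preserving_rel_closure:
  assumes "inner_preserving_rel G"
  shows "inner_preserving_rel (closure G)"
  unfolding inner_preserving_rel_def
proof (intro allI impI)
  fix a b a' b' assume "(a, b) \<in> closure G" "(a', b') \<in> closure G"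
  then obtain P P' where P: "\<And>n. P n \<in> G" "P \<longlonglongrightarrow> (a, b)" and P': "\<And>n. P' n \<in> G" "P' \<longlonglongrightarrow> (a', b')"
    unfolding closure_sequential by blast
  have "(\<lambda>n. hinner (snd (P n)) (snd (P' n))) \<longlonglongrightarrow> hinner b b'"
    using tendsto_snd[OF P(2)] tendsto_snd[OF P'(2)] by (intro tendsto_hinner) simp_all
  moreover have "(\<lambda>n. hinner (fst (P n)) (fst (P' n))) \<longlonglongrightarrow> hinner a a'"
    using tendsto_fst[OF P(2)] tendsto_fst[OF P'(2)] by (intro tendsto_hinner) simp_all
  moreover have "hinner (snd (P n)) (snd (P' n)) = hinner (fst (P n)) (fst (P' n))" for n
    using assms P(1)[of n] P'(1)[of n] unfolding inner_preserving_rel_def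
    by (metis prod.collapse)
  ultimately show "hinner b b' = hinner a a'" using LIMSEQ_unique by simp
qed

text \<open>Completeness of the target space is used here: the images of a convergent sequence form a
  Cauchy sequence because the relation is isometric.\<close>

lemma inner_preserving_rel_closure_total:
  fixes G :: "('h::chilbert \<times> 'k::chilbert) set"
  assumes "inner_preserving_rel G" "a \<in> closure (fst ` G)"
  shows "\<exists>b. (a, b) \<in> closure G"
proof -
  obtain A where A: "\<And>n. A n \<in> fst ` G" "A \<longlonglongrightarrow> a"
    using assms(2) unfolding closure_sequential by blast
  have "\<forall>n. \<exists>b. (A n, b) \<in> G" using A(1) by force
  then obtain B where B: "\<And>n. (A n, B n) \<in> G" by metis
  have "Cauchy A" using A(2) by (rule LIMSEQ_imp_Cauchy)
  then have "Cauchy B"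
    unfolding Cauchy_def using inner_preserving_rel_dist[OF assms(1) B B] by simp
  then obtain b where "B \<longlonglongrightarrow> b" using Cauchy_convergent_iff convergent_def by blast
  then have "(\<lambda>n. (A n, B n)) \<longlonglongrightarrow> (a, b)" using A(2) by (intro tendsto_Pair)
  then show ?thesis
    using B unfolding closure_sequential by (intro exI[of _ b] exI[of _ "\<lambda>n. (A n, B n)"]) simp
qed

definition span_graph :: "'i set \<Rightarrow> ('i \<Rightarrow> 'h::cvec) \<Rightarrow> ('i \<Rightarrow> 'k::cvec) \<Rightarrow> ('h \<times> 'k) set" where
  "span_graph I u w = {((\<Sum>i<n. cscale (c i) (u (p i))), (\<Sum>i<n. cscale (c i) (w (p i)))) |
      (n::nat) c p. \<forall>i<n. p i \<in> I}"

lemma inner_preserving_rel_span_graph: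
  assumes "\<And>i j. i \<in> I \<Longrightarrow> j \<in> I \<Longrightarrow> hinner (w i) (w j) = hinner (u i) (u j)"
  shows "inner_preserving_rel (span_graph I u w)"
  unfolding inner_preserving_rel_def span_graph_def
  using assms
  by (auto simp: hinner_sum_left hinner_sum_right hinner_cscale_left hinner_cscale_right
      intro!: sum.cong)

lemma complex_span_subset_fst_span_graph:
  "complex_span (u ` I) \<subseteq> fst ` span_graph I u w"
proof
  fix s assume "s \<in> complex_span (u ` I)"
  then obtain n :: nat and c v where v: "\<forall>i<n. v i \<in> u ` I" and s: "s = (\<Sum>i<n. cscale (c i) (v i))"
    unfolding complex_span_def by blast
  have "\<forall>i. \<exists>j. i < n \<longrightarrow> j \<in> I \<and> v i = u j" using v by blast
  then obtain p where p: "\<And>i. i < n \<Longrightarrow> p i \<in> I \<and> v i = u (p i)" by metis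
  then have "s = (\<Sum>i<n. cscale (c i) (u (p i)))" unfolding s by (intro sum.cong) auto
  moreover have "((\<Sum>i<n. cscale (c i) (u (p i))), (\<Sum>i<n. cscale (c i) (w (p i)))) \<in> span_graph I u w"
    unfolding span_graph_def using p by (intro CollectI exI[of _ n] exI[of _ c] exI[of _ p]) simp
  ultimately show "s \<in> fst ` span_graph I u w" by (simp add: rev_image_eqI)
qed

lemma generator_in_span_graph:
  assumes "i \<in> I"
  shows "(u i, w i) \<in> span_graph I u w"
  unfolding span_graph_def using assms
  by (intro CollectI exI[of _ "Suc 0"] exI[of _ "\<lambda>_. 1"] exI[of _ "\<lambda>_. i"]) (simp add: cscale_one)

theorem inner_preserving_extension:
  fixes u :: "'i \<Rightarrow> 'h::chilbert" and w :: "'i \<Rightarrow> 'k::chilbert"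
  assumes "\<And>i j. i \<in> I \<Longrightarrow> j \<in> I \<Longrightarrow> hinner (w i) (w j) = hinner (u i) (u j)"
    and dense: "closure (complex_span (u ` I)) = UNIV"
  shows "\<exists>V. inner_preserving V \<and> (\<forall>i\<in>I. V (u i) = w i)"
proof -
  define G where "G = closure (span_graph I u w)"
  have G: "inner_preserving_rel G"
    unfolding G_def by (intro inner_preserving_rel_closure inner_preserving_rel_span_graph assms)
  have "a \<in> closure (fst ` span_graph I u w)" for a
    using closure_mono[OF complex_span_subset_fst_span_graph[of u I w]] dense by blast
  then have "\<exists>b. (a, b) \<in> G" for a
    unfolding G_def using assms(1)
    by (intro inner_preserving_rel_closure_total inner_preserving_rel_span_graph)
  then have V: "(a, SOME b. (a, b) \<in> G) \<in> G" for a by (rule someI_ex)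
  have unique: "b = b'" if "(a, b) \<in> G" "(a, b') \<in> G" for a b b'
    using inner_preserving_rel_dist[OF G that] by simp
  have "inner_preserving (\<lambda>a. SOME b. (a, b) \<in> G)"
    using G V unfolding inner_preserving_def inner_preserving_rel_def by blast
  moreover have "(u i, w i) \<in> G" if "i \<in> I" for i
    unfolding G_def using generator_in_span_graph[OF that] closure_subset by blast
  ultimately show ?thesis using unique V by blast
qed

lemma phi_map_hinner:
  assumes "phi_map ip \<phi> X \<Phi>" "x \<in> X" "y \<in> X"
  shows "hinner (\<Phi> x h) (\<Phi> y k) = hinner h (\<phi> (ip x y) k)"
proof -
  have "cblin (\<Phi> x)" "cadj (\<Phi> x) \<circ> \<Phi> y = \<phi> (ip x y)"
    using assms unfolding phi_map_def by blast+
  then show ?thesis using hinner_cadj by (metis comp_apply)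
qed

lemma phi_map_comp_inner_preserving:
  assumes "phi_map ip \<phi> X \<Psi>" "inner_preserving V"
  shows "phi_map ip \<phi> X (\<lambda>x h. V (\<Psi> x h))"
  using assms unfolding phi_map_def
  by (simp add: cblin_comp_inner_preserving comp_def cadj_comp_inner_preserving)

lemma completely_positive_zero: "completely_positive \<phi> \<Longrightarrow> \<phi> 0 h = 0"
  unfolding completely_positive_def by (metis add_0 add_left_imp_eq add.right_neutral)

lemma phi_map_extension_vanishes_on_orth:
  fixes ip :: "'e::cvec \<Rightarrow> 'e \<Rightarrow> 'a::cstar"
  assumes hm: "hilbert_module act ip"
    and cp: "completely_positive \<phi>"
    and nd: "nondegenerate F \<Phi>"
    and \<Psi>: "phi_map ip \<phi> UNIV \<Psi>"
    and ext: "\<forall>x\<in>F. \<Psi> x = \<Phi> x"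
    and z: "z \<in> module_orth ip F"
  shows "\<Psi> z = (\<lambda>k. 0)"
proof
  fix k
  show "\<Psi> z k = 0"
  proof (rule orthogonal_to_dense_span_eq_0)
    show "closure (complex_span {\<Phi> x h | x h. x \<in> F}) = UNIV"
      using nd unfolding nondegenerate_def .
    fix v assume "v \<in> {\<Phi> x h | x h. x \<in> F}"
    then obtain y h where "y \<in> F" "v = \<Psi> y h" using ext by auto
    moreover have "ip y z = adjA (ip z y)" using hm unfolding hilbert_module_def by metis
    moreover have "adjA (0::'a) = 0" using adjA_add[of "0::'a" 0] by simp
    ultimately show "hinner v (\<Psi> z k) = 0"
      using z phi_map_hinner[OF \<Psi>] completely_positive_zero[OF cp]
      unfolding module_orth_def by simp
  qed
qed

theorem phi_ip_module_orth_eq_0: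
  assumes "hilbert_module act ip" "completely_positive \<phi>" "nondegenerate F \<Phi>"
    and \<Psi>: "phi_map ip \<phi> UNIV \<Psi>"
    and "\<forall>x\<in>F. \<Psi> x = \<Phi> x" "z \<in> module_orth ip F"
  shows "\<phi> (ip z x) h = 0"
proof -
  have "hinner k (\<phi> (ip z x) h) = 0" for k
    using phi_map_hinner[OF \<Psi>, of z x k h] phi_map_extension_vanishes_on_orth[OF assms] by simp
  from this[of "\<phi> (ip z x) h"] show ?thesis by simp
qed

theorem phi_map_extension:
  fixes \<Phi> \<Psi> :: "'e \<Rightarrow> 'h1::chilbert \<Rightarrow> 'h2::chilbert" and \<Theta> :: "'e \<Rightarrow> 'h1 \<Rightarrow> 'k::chilbert"
  assumes \<Phi>: "phi_map ip \<phi> F \<Phi>" and nd: "nondegenerate F \<Phi>"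
    and \<Psi>: "phi_map ip \<phi> UNIV \<Psi>" and ext: "\<forall>x\<in>F. \<Psi> x = \<Phi> x"
    and \<Theta>: "phi_map ip \<phi> F \<Theta>"
  shows "\<exists>\<Theta>'. phi_map ip \<phi> UNIV \<Theta>' \<and> (\<forall>x\<in>F. \<Theta>' x = \<Theta> x)"
proof -
  have "(\<lambda>(x, h). \<Phi> x h) ` (F \<times> UNIV) = {\<Phi> x h | x h. x \<in> F}" by auto
  then obtain V where V: "inner_preserving V" and V_\<Phi>: "\<And>x h. x \<in> F \<Longrightarrow> V (\<Phi> x h) = \<Theta> x h"
    using inner_preserving_extension[of "F \<times> UNIV" "\<lambda>(x, h). \<Theta> x h" "\<lambda>(x, h). \<Phi> x h"]
      nd phi_map_hinner[OF \<Phi>] phi_map_hinner[OF \<Theta>]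
    unfolding nondegenerate_def by fastforce
  show ?thesis
    using phi_map_comp_inner_preserving[OF \<Psi> V] ext V_\<Phi> by (intro exI[of _ "\<lambda>x h. V (\<Psi> x h)"]) auto
qed

theorem lemma2p2:
  fixes act :: "'e::cvec \<Rightarrow> 'a::cstar \<Rightarrow> 'e"
    and ip :: "'e \<Rightarrow> 'e \<Rightarrow> 'a"
    and F :: "'e set"
    and \<phi> :: "'a \<Rightarrow> 'h1::chilbert \<Rightarrow> 'h1"
    and \<Phi> \<Psi> :: "'e \<Rightarrow> 'h1 \<Rightarrow> 'h2::chilbert"
  assumes "hilbert_module act ip"
    and "closed_submodule act ip F"
    and "F \<noteq> {0}"
    and "completely_positive \<phi>"
    and "phi_map ip \<phi> F \<Phi>"
    and "nondegenerate F \<Phi>"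
    and "phi_map ip \<phi> UNIV \<Psi>"
    and "\<forall>x\<in>F. \<Psi> x = \<Phi> x"
  shows "(\<forall>z\<in>module_orth ip F. \<forall>x h. \<phi> (ip z x) h = 0) \<and>
         (\<forall>\<Theta> :: 'e \<Rightarrow> 'h1 \<Rightarrow> 'k::chilbert. phi_map ip \<phi> F \<Theta> \<longrightarrow>
            (\<exists>\<Theta>'. phi_map ip \<phi> UNIV \<Theta>' \<and> (\<forall>x\<in>F. \<Theta>' x = \<Theta> x)))"
  using phi_ip_module_orth_eq_0[OF assms(1,4,6,7,8)] phi_map_extension[OF assms(5-8)] by blast

end
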